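(* Let $C\subseteq\mathbb{F}_q^n$ be a linear code and let $(A,B)$ be a $2$-power $t$-error locating pair for $C$. Let $\mathbf{y}=\mathbf{c}+\mathbf{e}$ with $\mathbf{c}\in C$, $\mathbf{e}\in\mathbb{F}_q^n$, $\mathrm{w}(\mathbf{e})=t$, and let $I_{\mathbf{e}}=\mathrm{supp}(\mathbf{e})$. Define $M_1=\{\mathbf{a}\in A\mid \langle \mathbf{a}*\mathbf{y},\mathbf{b}\rangle=0\ \forall \mathbf{b}\in B\}$, $M_2=\{\mathbf{a}\in A\mid \langle \mathbf{a}*\mathbf{y}^2,\mathbf{v}\rangle=0\ \forall \mathbf{v}\in (B^{\perp}*C)^{\perp}\}$ and $M=M_1\cap M_2$. Then $$A(I_{\mathbf{e}})\subseteq M\subseteq M_1\subseteq A.$$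
   Context: All codes are $\mathbb{F}_q$-linear subspaces of $\mathbb{F}_q^n$. For $\mathbf{u},\mathbf{v}\in\mathbb{F}_q^n$, $\mathbf{u}*\mathbf{v}=(u_1v_1,\dots,u_nv_n)$ and $\mathbf{u}^i=(u_1^i,\dots,u_n^i)$. For codes $A,B$, $A*B$ is the $\mathbb{F}_q$-span of $\{\mathbf{a}*\mathbf{b}:\mathbf{a}\in A,\mathbf{b}\in B\}$. $\langle\mathbf{u},\mathbf{v}\rangle=\sum_i u_iv_i$, and $X^\perp$ is the dual code with respect to it. $\mathrm{w}$ is the Hamming weight, $\mathrm{d}(X)$ the minimum distance, $\mathrm{supp}(\mathbf{x})=\{i: x_i\neq 0\}$. For $J\subseteq\{1,\dots,n\}$, $A(J)=\{\mathbf{a}\in A\mid a_j=0\ \forall j\in J\}\subseteq\mathbb{F}_q^n$ (zeros are kept, not deleted). A pair $(A,B)$ of codes in $\mathbb{F}_q^n$ is a $2$-power $t$-error locating pair for $C$ if: (1) $A*B\subseteq C^\perp$; (2) $\dim A>t$; (3) $\mathrm{d}(A^\perp)>t$; (4) $\mathrm{d}(A)+\mathrm{d}(C)>n$; (5) $\dim B+\dim (B^\perp*C)^\perp\ge t$. *)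

theory Defs
  imports "HOL-Analysis.Analysis"
begin

text \<open>Codes are F_q-linear subspaces of F_q^n, modelled as subsets of 'a^'n with
  'a a finite field and 'n a finite index type (n = CARD('n)).\<close>

definition is_code :: "(('a::{field,finite})^'n) set \<Rightarrow> bool" where
  "is_code X \<longleftrightarrow> vec.subspace X"

definition schur :: "('a::field)^'n \<Rightarrow> 'a^'n \<Rightarrow> 'a^'n" where
  "schur u v = (\<chi> i. u $ i * v $ i)"

definition vpow :: "('a::field)^'n \<Rightarrow> nat \<Rightarrow> 'a^'n" where
  "vpow u k = (\<chi> i. (u $ i) ^ k)"

definition schur_code :: "(('a::field)^'n) set \<Rightarrow> ('a^'n) set \<Rightarrow> ('a^'n) set" where
  "schur_code A B = vec.span {schur a b | a b. a \<in> A \<and> b \<in> B}"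

definition binner :: "('a::field)^'n \<Rightarrow> 'a^'n \<Rightarrow> 'a" where
  "binner u v = (\<Sum>i\<in>UNIV. u $ i * v $ i)"

definition dual_code :: "(('a::field)^'n) set \<Rightarrow> ('a^'n) set" where
  "dual_code X = {u. \<forall>x\<in>X. binner u x = 0}"

definition supp :: "('a::field)^'n \<Rightarrow> 'n set" where
  "supp x = {i. x $ i \<noteq> 0}"

definition hweight :: "('a::field)^'n \<Rightarrow> nat" where
  "hweight x = card (supp x)"

text \<open>Minimum distance; for the zero code we use the convention d = n + 1.\<close>
definition min_dist :: "(('a::field)^'n) set \<Rightarrow> nat" where
  "min_dist X = (if X - {0} = {} then CARD('n) + 1
                 else Min (hweight ` (X - {0})))"

definition shortened :: "(('a::field)^'n) set \<Rightarrow> 'n set \<Rightarrow> ('a^'n) set" where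
  "shortened A J = {a \<in> A. \<forall>j\<in>J. a $ j = 0}"

definition two_power_locating_pair ::
  "(('a::{field,finite})^'n) set \<Rightarrow> ('a^'n) set \<Rightarrow> nat \<Rightarrow> ('a^'n) set \<Rightarrow> bool" where
  "two_power_locating_pair A B t C \<longleftrightarrow>
     is_code A \<and> is_code B \<and>
     schur_code A B \<subseteq> dual_code C \<and>
     vec.dim A > t \<and>
     min_dist (dual_code A) > t \<and>
     min_dist A + min_dist C > CARD('n) \<and>
     vec.dim B + vec.dim (dual_code (schur_code (dual_code B) C)) \<ge> t"

definition M1 :: "(('a::field)^'n) set \<Rightarrow> ('a^'n) set \<Rightarrow> 'a^'n \<Rightarrow> ('a^'n) set" where
  "M1 A B y = {a \<in> A. \<forall>b\<in>B. binner (schur a y) b = 0}"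

definition M2 :: "(('a::field)^'n) set \<Rightarrow> ('a^'n) set \<Rightarrow> ('a^'n) set \<Rightarrow> 'a^'n \<Rightarrow> ('a^'n) set" where
  "M2 A B C y = {a \<in> A. \<forall>v\<in>dual_code (schur_code (dual_code B) C).
                    binner (schur a (vpow y 2)) v = 0}"

end

theory Submission
  imports Defs
begin

text \<open>If \<open>a\<close> vanishes on the support of \<open>e\<close>, then \<open>a * y = a * c\<close> and \<open>a * y\<^sup>2 = (a * c) * c\<close>.
  Condition (1), \<open>A * B \<subseteq> C\<^sup>\<perp>\<close>, says exactly that \<open>a * c \<in> B\<^sup>\<perp>\<close>; hence \<open>a * y\<close> is orthogonal
  to \<open>B\<close>, and \<open>a * y\<^sup>2\<close> lies in \<open>B\<^sup>\<perp> * C\<close> and so is orthogonal to \<open>(B\<^sup>\<perp> * C)\<^sup>\<perp>\<close>.\<close>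

lemma binner_commute: "binner u v = binner v u"
  unfolding binner_def by (simp add: mult.commute)

lemma binner_schur_swap: "binner (schur a b) c = binner (schur a c) b"
  unfolding binner_def schur_def by (simp add: algebra_simps)

lemma vpow_two_eq_schur: "vpow y 2 = schur y y"
  unfolding vpow_def schur_def by (simp add: power2_eq_square)

lemma schur_assoc: "schur (schur a b) c = schur a (schur b c)"
  unfolding schur_def by (simp add: mult.assoc)

lemma schur_commute: "schur a b = schur b a"
  unfolding schur_def by (simp add: mult.commute)

lemma schur_in_schur_code: "a \<in> A \<Longrightarrow> b \<in> B \<Longrightarrow> schur a b \<in> schur_code A B"
  unfolding schur_code_def by (rule vec.span_base) blast

lemma schur_add_disjoint_supp:
  assumes "\<forall>j\<in>supp e. a $ j = 0"
  shows "schur a (x + e) = schur a x"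
  using assms unfolding schur_def supp_def by (auto simp: vec_eq_iff distrib_left)

lemma schur_in_dual_if_schur_code_subset_dual:
  assumes "schur_code A B \<subseteq> dual_code C" and "a \<in> A" and "c \<in> C"
  shows "schur a c \<in> dual_code B"
proof -
  have "binner (schur a c) b = 0" if "b \<in> B" for b
  proof -
    have "schur a b \<in> dual_code C"
      using assms(1,2) that schur_in_schur_code by blast
    then have "binner (schur a b) c = 0"
      using assms(3) unfolding dual_code_def by (simp add: binner_commute)
    then show ?thesis by (simp add: binner_schur_swap)
  qed
  then show ?thesis unfolding dual_code_def by blast
qed

lemma shortened_subset_M1:
  assumes "schur_code A B \<subseteq> dual_code C" and "c \<in> C"
  shows "shortened A (supp e) \<subseteq> M1 A B (c + e)"
proof
  fix a assume "a \<in> shortened A (supp e)"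
  then have "a \<in> A" and vanish: "\<forall>j\<in>supp e. a $ j = 0"
    unfolding shortened_def by auto
  have "schur a c \<in> dual_code B"
    using schur_in_dual_if_schur_code_subset_dual assms \<open>a \<in> A\<close> by blast
  then show "a \<in> M1 A B (c + e)"
    using \<open>a \<in> A\<close> schur_add_disjoint_supp[OF vanish]
    unfolding M1_def dual_code_def by (simp add: binner_commute)
qed

lemma shortened_subset_M2:
  assumes "schur_code A B \<subseteq> dual_code C" and "c \<in> C"
  shows "shortened A (supp e) \<subseteq> M2 A B C (c + e)"
proof
  fix a assume "a \<in> shortened A (supp e)"
  then have "a \<in> A" and vanish: "\<forall>j\<in>supp e. a $ j = 0"
    unfolding shortened_def by auto
  have "schur a (vpow (c + e) 2) = schur (schur a (c + e)) (c + e)"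
    by (simp add: vpow_two_eq_schur schur_assoc)
  also have "\<dots> = schur c (schur a (c + e))"
    by (simp add: schur_add_disjoint_supp[OF vanish] schur_commute[of a c] schur_assoc)
  also have "\<dots> = schur (schur a c) c"
    by (simp add: schur_add_disjoint_supp[OF vanish] schur_commute[of c])
  finally have square: "schur a (vpow (c + e) 2) = schur (schur a c) c" .
  have "schur a c \<in> dual_code B"
    using schur_in_dual_if_schur_code_subset_dual assms \<open>a \<in> A\<close> by blast
  then have "schur (schur a c) c \<in> schur_code (dual_code B) C"
    using assms(2) by (rule schur_in_schur_code)
  then show "a \<in> M2 A B C (c + e)"
    using \<open>a \<in> A\<close> unfolding M2_def dual_code_def by (simp add: square binner_commute)
qed

text \<open>Only condition (1) of the locating pair enters.\<close>

theorem proposition3p4: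
  fixes C A B :: "(('a::{field,finite})^'n) set"
    and t :: nat and c e y :: "'a^'n"
  assumes "is_code C"
    and "two_power_locating_pair A B t C"
    and "c \<in> C"
    and "hweight e = t"
    and "y = c + e"
  shows "shortened A (supp e) \<subseteq> M1 A B y \<inter> M2 A B C y
         \<and> M1 A B y \<inter> M2 A B C y \<subseteq> M1 A B y
         \<and> M1 A B y \<subseteq> A"
proof -
  have AB: "schur_code A B \<subseteq> dual_code C"
    using assms(2) unfolding two_power_locating_pair_def by blast
  show ?thesis
    using shortened_subset_M1[OF AB assms(3)] shortened_subset_M2[OF AB assms(3)] assms(5)
    unfolding M1_def by blast
qed

end
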